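(* Let $H$ be a complex-valued harmonic function in $\mathbb{D}=\{|z|<1\}$ and let $u(z)=H(z)+\frac12(1-|z|^{2})\big(zH_z(z)+\overline{z}H_{\overline{z}}(z)\big)$. If $u$ maps $\mathbb{D}$ into $\mathbb{D}$, then there exists a constant $c$ with $0<c<\infty$ such that $$(1-|z|^{2})\big(|u_z(z)|+|u_{\overline{z}}(z)|\big)\le c\quad\text{for all } z\in\mathbb{D};$$ that is, $u$ is a Bloch function. *)

theory Defs
  imports "HOL-Analysis.Analysis"
begin

definition dx :: "(complex \<Rightarrow> complex) \<Rightarrow> complex \<Rightarrow> complex" where
  "dx f z = frechet_derivative f (at z) 1"

definition dy :: "(complex \<Rightarrow> complex) \<Rightarrow> complex \<Rightarrow> complex" where
  "dy f z = frechet_derivative f (at z) \<i>"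

definition dz :: "(complex \<Rightarrow> complex) \<Rightarrow> complex \<Rightarrow> complex" where
  "dz f z = (dx f z - \<i> * dy f z) / 2"

definition dzbar :: "(complex \<Rightarrow> complex) \<Rightarrow> complex \<Rightarrow> complex" where
  "dzbar f z = (dx f z + \<i> * dy f z) / 2"

definition harmonic_on :: "(complex \<Rightarrow> complex) \<Rightarrow> complex set \<Rightarrow> bool" where
  "harmonic_on H S \<longleftrightarrow> open S \<and>
     (\<forall>z\<in>S. H differentiable (at z)) \<and>
     (\<forall>z\<in>S. dx H differentiable (at z) \<and> dy H differentiable (at z)) \<and>
     continuous_on S (dx (dx H)) \<and> continuous_on S (dy (dx H)) \<and>
     continuous_on S (dx (dy H)) \<and> continuous_on S (dy (dy H)) \<and>
     (\<forall>z\<in>S. dx (dx H) z + dy (dy H) z = 0)"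

end

(*
  Since H is harmonic, H_z is holomorphic, and H = h + cnj g with h, g holomorphic,
  h' = H_z and g' = cnj H_zbar.  On a ray t |-> t z the transform reads
  u = H + (1 - t^2 |z|^2) t / 2 * d/dt H, and t^2 / (1 - t^2 |z|^2) is an integrating
  factor for this operator; integrating along the ray turns |u| < 1 into |H| <= 1.
  Then Re H and Im H are the real parts of the holomorphic functions h + g and
  -i (h - g), so Cauchy estimates for their exponentials on the disc of radius 1 - |a|
  bound h', g' by C / (1 - |a|) and h'', g'' by C / (1 - |a|)^2.  Differentiating the
  formula for u expresses u_z and u_zbar through these quantities.
*)
theory Submission
  imports Defs "HOL-Complex_Analysis.Complex_Analysis"
begin

lemma norm_increment_minus_linear_le:
  fixes f f' :: "real \<Rightarrow> 'a::real_normed_vector"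
  assumes "0 \<le> T"
    and f': "\<And>t. t \<in> {0..T} \<Longrightarrow> (f has_vector_derivative f' t) (at t)"
    and close: "\<And>t. t \<in> {0..T} \<Longrightarrow> norm (f' t - C) \<le> \<epsilon>"
  shows "norm (f T - f 0 - T *\<^sub>R C) \<le> T * \<epsilon>"
proof -
  define g where "g t = f t - t *\<^sub>R C" for t
  have "(g has_derivative (\<lambda>d. d *\<^sub>R (f' t - C))) (at t within {0..T})" if "t \<in> {0..T}" for t
    using has_vector_derivative_at_within[OF f'[OF that]] unfolding g_def has_vector_derivative_def
    by (auto intro!: derivative_eq_intros simp: algebra_simps)
  moreover have "onorm (\<lambda>d. d *\<^sub>R (f' t - C)) \<le> \<epsilon>" if "t \<in> {0..T}" for t
    using mult_right_mono[OF close[OF that] abs_ge_zero] by (intro onorm_le) (simp add: mult.commute)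
  ultimately have "norm (g T - g 0) \<le> \<epsilon> * norm (T - 0)"
    using \<open>0 \<le> T\<close> by (intro differentiable_bound[of "{0..T}"]) auto
  then show ?thesis using \<open>0 \<le> T\<close> by (simp add: g_def algebra_simps)
qed

lemma norm_mixed_second_difference_le:
  fixes f f\<^sub>1 f\<^sub>1\<^sub>2 :: "real \<Rightarrow> real \<Rightarrow> 'a::real_normed_vector"
  assumes "0 \<le> h"
    and f\<^sub>1: "\<And>t s. t \<in> {0..h} \<Longrightarrow> s \<in> {0..h} \<Longrightarrow> ((\<lambda>t. f t s) has_vector_derivative f\<^sub>1 t s) (at t)"
    and f\<^sub>1\<^sub>2: "\<And>t s. t \<in> {0..h} \<Longrightarrow> s \<in> {0..h} \<Longrightarrow> ((\<lambda>s. f\<^sub>1 t s) has_vector_derivative f\<^sub>1\<^sub>2 t s) (at s)"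
    and close: "\<And>t s. t \<in> {0..h} \<Longrightarrow> s \<in> {0..h} \<Longrightarrow> norm (f\<^sub>1\<^sub>2 t s - C) \<le> \<epsilon>"
  shows "norm (f h h - f h 0 - f 0 h + f 0 0 - h\<^sup>2 *\<^sub>R C) \<le> h\<^sup>2 * \<epsilon>"
proof -
  have ends: "h \<in> {0..h}" "0 \<in> {0..h}" using \<open>0 \<le> h\<close> by auto
  have inner: "norm (f\<^sub>1 t h - f\<^sub>1 t 0 - h *\<^sub>R C) \<le> h * \<epsilon>" if "t \<in> {0..h}" for t
    using norm_increment_minus_linear_le[OF \<open>0 \<le> h\<close>, of "f\<^sub>1 t"] f\<^sub>1\<^sub>2 close that by blast
  have "norm ((f h h - f h 0) - (f 0 h - f 0 0) - h *\<^sub>R (h *\<^sub>R C)) \<le> h * (h * \<epsilon>)"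
  proof (rule norm_increment_minus_linear_le[OF \<open>0 \<le> h\<close>, of "\<lambda>t. f t h - f t 0"])
    fix t assume "t \<in> {0..h}"
    then show "((\<lambda>t. f t h - f t 0) has_vector_derivative f\<^sub>1 t h - f\<^sub>1 t 0) (at t)"
      using f\<^sub>1 ends by (intro has_vector_derivative_diff)
    show "norm (f\<^sub>1 t h - f\<^sub>1 t 0 - h *\<^sub>R C) \<le> h * \<epsilon>"
      using inner \<open>t \<in> {0..h}\<close> .
  qed
  then show ?thesis by (simp add: algebra_simps power2_eq_square)
qed

lemma has_vector_derivative_along_line:
  fixes H :: "'a::real_normed_vector \<Rightarrow> 'b::real_normed_vector"
  assumes "H differentiable (at (p + t *\<^sub>R e))"
  shows "((\<lambda>t. H (p + t *\<^sub>R e)) has_vector_derivative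
           frechet_derivative H (at (p + t *\<^sub>R e)) e) (at t)"
proof -
  let ?D = "frechet_derivative H (at (p + t *\<^sub>R e))"
  have D: "(H has_derivative ?D) (at (p + t *\<^sub>R e))"
    using assms frechet_derivative_works by blast
  have "((\<lambda>t. p + t *\<^sub>R e) has_derivative (\<lambda>d. d *\<^sub>R e)) (at t)"
    by (auto intro!: derivative_eq_intros)
  from has_derivative_compose[OF this D]
  have "((\<lambda>t. H (p + t *\<^sub>R e)) has_derivative (\<lambda>d. ?D (d *\<^sub>R e))) (at t)"
    by (simp add: o_def)
  moreover have "?D (d *\<^sub>R e) = d *\<^sub>R ?D e" for d
    using has_derivative_linear[OF D] by (rule linear_scale)
  ultimately show ?thesis by (simp add: has_vector_derivative_def)
qed

lemma norm_diff_mixed_partials_le: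
  fixes H :: "complex \<Rightarrow> complex"
  assumes "h > 0"
    and diff: "\<And>w. w \<in> cball z (2 * h) \<Longrightarrow>
      H differentiable (at w) \<and> dx H differentiable (at w) \<and> dy H differentiable (at w)"
    and close: "\<And>w. w \<in> cball z (2 * h) \<Longrightarrow>
      norm (dy (dx H) w - A) \<le> \<epsilon> \<and> norm (dx (dy H) w - B) \<le> \<epsilon>"
  shows "norm (A - B) \<le> 2 * \<epsilon>"
proof -
  define Q where "Q t s = z + (of_real t + \<i> * of_real s)" for t s
  have Q: "Q t s \<in> cball z (2 * h)" if "t \<in> {0..h}" "s \<in> {0..h}" for t s
  proof -
    have "dist z (Q t s) = norm (of_real t + \<i> * of_real s)"
      unfolding Q_def by (metis add_diff_cancel_left' dist_commute dist_norm)
    also have "\<dots> \<le> \<bar>t\<bar> + \<bar>s\<bar>"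
      by (metis norm_triangle_le norm_of_real norm_mult norm_ii mult_1 order_refl)
    finally show ?thesis using that by simp
  qed
  have along_x: "((\<lambda>t. F (Q t s)) has_vector_derivative dx F (Q t s)) (at t)"
    if "F differentiable (at (Q t s))" for F t s
    using has_vector_derivative_along_line[of F "z + \<i> * of_real s" t 1] that
    by (simp add: Q_def dx_def scaleR_conv_of_real algebra_simps)
  have along_y: "((\<lambda>s. F (Q t s)) has_vector_derivative dy F (Q t s)) (at s)"
    if "F differentiable (at (Q t s))" for F t s
    using has_vector_derivative_along_line[of F "z + of_real t" s \<i>] that
    by (simp add: Q_def dy_def scaleR_conv_of_real algebra_simps)
  have "((\<lambda>t. H (Q t s)) has_vector_derivative dx H (Q t s)) (at t)"
    "((\<lambda>s. dx H (Q t s)) has_vector_derivative dy (dx H) (Q t s)) (at s)"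
    "((\<lambda>s. H (Q t s)) has_vector_derivative dy H (Q t s)) (at s)"
    "((\<lambda>t. dy H (Q t s)) has_vector_derivative dx (dy H) (Q t s)) (at t)"
    if "t \<in> {0..h}" "s \<in> {0..h}" for t s
    using diff[OF Q[OF that]] by (blast intro: along_x along_y)+
  note partials = this
  define \<Delta> where "\<Delta> = H (Q h h) - H (Q h 0) - H (Q 0 h) + H (Q 0 0)"
  have "norm (\<Delta> - h\<^sup>2 *\<^sub>R A) \<le> h\<^sup>2 * \<epsilon>"
    unfolding \<Delta>_def using \<open>h > 0\<close> Q close
    by (intro norm_mixed_second_difference_le[of h "\<lambda>t s. H (Q t s)" "\<lambda>t s. dx H (Q t s)"
          "\<lambda>t s. dy (dx H) (Q t s)"]) (auto intro: partials)
  moreover have "norm (H (Q h h) - H (Q 0 h) - H (Q h 0) + H (Q 0 0) - h\<^sup>2 *\<^sub>R B) \<le> h\<^sup>2 * \<epsilon>"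
    using \<open>h > 0\<close> Q close
    by (intro norm_mixed_second_difference_le[of h "\<lambda>s t. H (Q t s)" "\<lambda>s t. dy H (Q t s)"
          "\<lambda>s t. dx (dy H) (Q t s)"]) (auto intro: partials)
  then have "norm (\<Delta> - h\<^sup>2 *\<^sub>R B) \<le> h\<^sup>2 * \<epsilon>"
    by (simp add: \<Delta>_def algebra_simps)
  ultimately have "norm (h\<^sup>2 *\<^sub>R (A - B)) \<le> h\<^sup>2 * (2 * \<epsilon>)"
    using norm_triangle_ineq4[of "\<Delta> - h\<^sup>2 *\<^sub>R B" "\<Delta> - h\<^sup>2 *\<^sub>R A"]
    by (simp add: algebra_simps)
  then show ?thesis using \<open>h > 0\<close> by simp
qed

lemma dy_dx_eq_dx_dy:
  fixes H :: "complex \<Rightarrow> complex"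
  assumes "open S" "z \<in> S"
    and diff: "\<And>w. w \<in> S \<Longrightarrow>
      H differentiable (at w) \<and> dx H differentiable (at w) \<and> dy H differentiable (at w)"
    and "continuous_on S (dy (dx H))" "continuous_on S (dx (dy H))"
  shows "dy (dx H) z = dx (dy H) z"
proof -
  have bound: "norm (dy (dx H) z - dx (dy H) z) \<le> 2 * \<epsilon>" if "\<epsilon> > 0" for \<epsilon>
  proof -
    have "isCont (dy (dx H)) z" "isCont (dx (dy H)) z"
      using assms continuous_on_eq_continuous_at by blast+
    then obtain d\<^sub>1 d\<^sub>2 where "d\<^sub>1 > 0" "d\<^sub>2 > 0"
      and d\<^sub>1: "\<And>w. dist w z < d\<^sub>1 \<Longrightarrow> dist (dy (dx H) w) (dy (dx H) z) < \<epsilon>"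
      and d\<^sub>2: "\<And>w. dist w z < d\<^sub>2 \<Longrightarrow> dist (dx (dy H) w) (dx (dy H) z) < \<epsilon>"
      using \<open>\<epsilon> > 0\<close> unfolding continuous_at_eps_delta by metis
    obtain d where "d > 0" "ball z d \<subseteq> S" using assms openE by blast
    define h where "h = min d (min d\<^sub>1 d\<^sub>2) / 3"
    have "h > 0" using \<open>d > 0\<close> \<open>d\<^sub>1 > 0\<close> \<open>d\<^sub>2 > 0\<close> by (simp add: h_def)
    show ?thesis
    proof (rule norm_diff_mixed_partials_le[OF \<open>h > 0\<close>])
      fix w assume "w \<in> cball z (2 * h)"
      then have "w \<in> S" "dist w z < d\<^sub>1" "dist w z < d\<^sub>2"
        using \<open>h > 0\<close> \<open>ball z d \<subseteq> S\<close> by (auto simp: h_def dist_commute)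
      then show "H differentiable (at w) \<and> dx H differentiable (at w) \<and> dy H differentiable (at w)"
        and "norm (dy (dx H) w - dy (dx H) z) \<le> \<epsilon> \<and> norm (dx (dy H) w - dx (dy H) z) \<le> \<epsilon>"
        using diff[OF \<open>w \<in> S\<close>] d\<^sub>1[OF \<open>dist w z < d\<^sub>1\<close>] d\<^sub>2[OF \<open>dist w z < d\<^sub>2\<close>]
        by (simp_all add: dist_norm)
    qed
  qed
  have "norm (dy (dx H) z - dx (dy H) z) \<le> 0"
  proof (rule field_le_epsilon)
    fix e :: real assume "e > 0"
    then show "norm (dy (dx H) z - dx (dy H) z) \<le> 0 + e" using bound[of "e / 2"] by simp
  qed
  then show ?thesis by simp
qed

lemma frechet_derivative_Wirtinger:
  fixes f :: "complex \<Rightarrow> complex"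
  assumes "f differentiable (at z)"
  shows "frechet_derivative f (at z) v = dz f z * v + dzbar f z * cnj v"
proof -
  let ?D = "frechet_derivative f (at z)"
  have lin: "linear ?D"
    using assms frechet_derivative_works has_derivative_linear by blast
  have "v = Re v *\<^sub>R 1 + Im v *\<^sub>R \<i>"
    by (simp add: complex_eq_iff)
  then have "?D v = ?D (Re v *\<^sub>R 1 + Im v *\<^sub>R \<i>)"
    by (rule arg_cong)
  also have "\<dots> = Re v *\<^sub>R dx f z + Im v *\<^sub>R dy f z"
    by (simp only: linear_add[OF lin] linear_scale[OF lin] dx_def dy_def)
  also have "\<dots> = dz f z * v + dzbar f z * cnj v"
    by (simp add: dz_def dzbar_def complex_eq_iff field_simps)
  finally show ?thesis .
qed

lemma has_derivative_Wirtinger: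
  fixes f :: "complex \<Rightarrow> complex"
  assumes "f differentiable (at z)"
  shows "(f has_derivative (\<lambda>v. dz f z * v + dzbar f z * cnj v)) (at z)"
proof -
  have "frechet_derivative f (at z) = (\<lambda>v. dz f z * v + dzbar f z * cnj v)"
    using frechet_derivative_Wirtinger[OF assms] by (rule ext)
  then show ?thesis
    using assms frechet_derivative_works by metis
qed

lemma Wirtinger_derivatives_unique:
  fixes f :: "complex \<Rightarrow> complex"
  assumes "(f has_derivative (\<lambda>v. A * v + B * cnj v)) (at z)"
  shows "dz f z = A" "dzbar f z = B"
proof -
  have D: "frechet_derivative f (at z) = (\<lambda>v. A * v + B * cnj v)"
    using assms by (rule frechet_derivative_at[symmetric])
  show "dz f z = A" "dzbar f z = B"
    by (simp_all add: dz_def dzbar_def dx_def dy_def D algebra_simps)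
qed

lemma holomorphic_on_dz_if_harmonic:
  assumes "harmonic_on H S"
  shows "dz H holomorphic_on S"
proof -
  have "open S" using assms by (simp add: harmonic_on_def)
  have "dz H field_differentiable (at z)" if "z \<in> S" for z
  proof -
    from assms that have "dx H differentiable (at z)" "dy H differentiable (at z)"
      and Laplace: "dx (dx H) z + dy (dy H) z = 0"
      by (auto simp: harmonic_on_def)
    moreover have Schwarz: "dy (dx H) z = dx (dy H) z"
      using assms that by (intro dy_dx_eq_dx_dy[of S]) (auto simp: harmonic_on_def)
    ultimately have D: "(dz H has_derivative
        (\<lambda>v. ((dz (dx H) z - \<i> * dz (dy H) z) / 2) * v
           + ((dzbar (dx H) z - \<i> * dzbar (dy H) z) / 2) * cnj v)) (at z)"
      unfolding dz_def[of H, abs_def]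
      by (auto intro!: derivative_eq_intros dest!: has_derivative_Wirtinger
          simp: fun_eq_iff field_simps)
    \<comment> \<open>Up to a factor, \<open>(dz H)\<^sub>z\<^sub>b\<^sub>a\<^sub>r\<close> is the Laplacian of \<open>H\<close> once the mixed partials agree.\<close>
    have "dzbar (dx H) z = \<i> * dzbar (dy H) z"
    proof -
      have "dy (dy H) z = - dx (dx H) z" using Laplace by (simp add: eq_neg_iff_add_eq_0 add.commute)
      then show ?thesis using Schwarz by (simp add: dzbar_def algebra_simps)
    qed
    then have "(dz H has_field_derivative (dz (dx H) z - \<i> * dz (dy H) z) / 2) (at z)"
      unfolding has_field_derivative_def by (intro has_derivative_eq_rhs[OF D]) (simp add: fun_eq_iff)
    then show ?thesis using field_differentiable_def by blast
  qed
  then show ?thesis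
    using \<open>open S\<close> holomorphic_on_def field_differentiable_at_within by blast
qed

lemma harmonic_decomposition:
  assumes "harmonic_on H S" "convex S"
  obtains h g where "h holomorphic_on S" "g holomorphic_on S"
    "\<And>w. w \<in> S \<Longrightarrow> H w = h w + cnj (g w)"
    "\<And>w. w \<in> S \<Longrightarrow> deriv h w = dz H w"
    "\<And>w. w \<in> S \<Longrightarrow> deriv g w = cnj (dzbar H w)"
proof -
  have "open S" using assms by (simp add: harmonic_on_def)
  obtain h where h: "\<And>w. w \<in> S \<Longrightarrow> (h has_field_derivative dz H w) (at w within S)"
    by (rule holomorphic_convex_primitive'[OF \<open>convex S\<close> \<open>open S\<close>
          holomorphic_on_dz_if_harmonic[OF \<open>harmonic_on H S\<close>]]) (rule that)
  have h': "(h has_field_derivative dz H w) (at w)" if "w \<in> S" for w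
    using h[OF that] unfolding at_within_open[OF that \<open>open S\<close>] .
  define g where "g w = cnj (H w - h w)" for w
  have g': "(g has_field_derivative cnj (dzbar H w)) (at w)" if "w \<in> S" for w
  proof -
    have "H differentiable (at w)" using assms that by (simp add: harmonic_on_def)
    then have "(H has_derivative (\<lambda>v. dz H w * v + dzbar H w * cnj v)) (at w)"
      by (rule has_derivative_Wirtinger)
    from has_derivative_diff[OF this h'[OF that, unfolded has_field_derivative_def]]
    have "(g has_derivative (\<lambda>v. cnj (dz H w * v + dzbar H w * cnj v - dz H w * v))) (at w)"
      unfolding g_def by (rule has_derivative_cnj)
    then show ?thesis
      unfolding has_field_derivative_def by (rule has_derivative_eq_rhs) (simp add: fun_eq_iff)
  qed
  show ?thesis
  proof
    show "h holomorphic_on S" "g holomorphic_on S"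
      using h' g' \<open>open S\<close> holomorphic_on_open by blast+
    show "deriv h w = dz H w" "deriv g w = cnj (dzbar H w)" if "w \<in> S" for w
      using h' g' that by (blast intro: DERIV_imp_deriv)+
  qed (simp add: g_def)
qed

lemma norm_le_one_if_radial_transform_le_one:
  fixes \<Phi> \<Phi>' :: "real \<Rightarrow> 'a::real_normed_vector"
  assumes "0 \<le> s" "s < 1"
    and \<Phi>': "\<And>t. t \<in> {0..1} \<Longrightarrow> (\<Phi> has_vector_derivative \<Phi>' t) (at t)"
    and bounded: "\<And>t. t \<in> {0..1} \<Longrightarrow> norm (\<Phi> t + ((1 - s * t\<^sup>2) / 2 * t) *\<^sub>R \<Phi>' t) \<le> 1"
  shows "norm (\<Phi> 1) \<le> 1"
proof -
  define R R' :: "real \<Rightarrow> real"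
    where "R t = t\<^sup>2 / (1 - s * t\<^sup>2)" and "R' t = 2 * t / (1 - s * t\<^sup>2)\<^sup>2" for t
  have pos: "1 - s * t\<^sup>2 > 0" if "t \<in> {0..1}" for t
  proof -
    have "s * t\<^sup>2 \<le> s"
      using that \<open>0 \<le> s\<close> by (simp add: mult_left_le power_le_one)
    then show ?thesis using \<open>s < 1\<close> by simp
  qed
  have R': "(R has_real_derivative R' t) (at t)" if "t \<in> {0..1}" for t
    unfolding R_def[abs_def] R'_def using pos[OF that]
    by (auto intro!: derivative_eq_intros simp: field_simps power2_eq_square)
  \<comment> \<open>\<open>R\<close> is an integrating factor: \<open>(R \<Phi>)' = R' (\<Phi> + (1 - s t\<^sup>2) t / 2 \<Phi>')\<close>.\<close>
  have integrating_factor: "R' t * ((1 - s * t\<^sup>2) / 2 * t) = R t" if "t \<in> {0..1}" for t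
  proof -
    define a where "a = 1 - s * t\<^sup>2"
    have "a \<noteq> 0" using pos[OF that] by (simp add: a_def)
    then have "2 * t / a\<^sup>2 * (a / 2 * t) = t\<^sup>2 / a"
      by (simp add: field_simps power2_eq_square)
    then show ?thesis by (simp add: R_def R'_def a_def)
  qed
  have product': "((\<lambda>t. R t *\<^sub>R \<Phi> t) has_vector_derivative
      R' t *\<^sub>R (\<Phi> t + ((1 - s * t\<^sup>2) / 2 * t) *\<^sub>R \<Phi>' t)) (at t)" if "t \<in> {0..1}" for t
  proof -
    have "R t *\<^sub>R \<Phi>' t + R' t *\<^sub>R \<Phi> t
        = R' t *\<^sub>R \<Phi> t + (R' t * ((1 - s * t\<^sup>2) / 2 * t)) *\<^sub>R \<Phi>' t"
      by (simp only: integrating_factor[OF that] add.commute)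
    also have "\<dots> = R' t *\<^sub>R (\<Phi> t + ((1 - s * t\<^sup>2) / 2 * t) *\<^sub>R \<Phi>' t)"
      by (simp only: scaleR_add_right scaleR_scaleR)
    finally show ?thesis
      using has_vector_derivative_scaleR[OF R'[OF that] \<Phi>'[OF that]] by simp
  qed
  have "norm (R 1 *\<^sub>R \<Phi> 1 - R 0 *\<^sub>R \<Phi> 0) \<le> R 1 - R 0"
  proof (rule differentiable_bound_general)
    show "continuous_on {0..1} (\<lambda>t. R t *\<^sub>R \<Phi> t)"
      using product' has_vector_derivative_continuous continuous_at_imp_continuous_on by blast
    show "continuous_on {0..1} R"
      using R' DERIV_isCont continuous_at_imp_continuous_on by blast
    fix t :: real assume "0 < t" "t < 1"
    then have t: "t \<in> {0..1}" by simp
    then show "(R has_vector_derivative R' t) (at t)"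
      using R' by (simp add: has_real_derivative_iff_has_vector_derivative)
    show "((\<lambda>t. R t *\<^sub>R \<Phi> t) has_vector_derivative
        R' t *\<^sub>R (\<Phi> t + ((1 - s * t\<^sup>2) / 2 * t) *\<^sub>R \<Phi>' t)) (at t)"
      using product'[OF t] .
    have "R' t \<ge> 0"
      using t by (simp add: R'_def)
    then show "norm (R' t *\<^sub>R (\<Phi> t + ((1 - s * t\<^sup>2) / 2 * t) *\<^sub>R \<Phi>' t)) \<le> R' t"
      using bounded[OF t] by (simp add: mult_left_le)
  qed simp
  then have "norm (\<Phi> 1) / (1 - s) \<le> 1 / (1 - s)"
    using \<open>s < 1\<close> by (simp add: R_def)
  then show ?thesis
    using \<open>s < 1\<close> by (simp add: divide_le_cancel)
qed

lemma norm_le_one_if_transform_maps_into_disc: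
  fixes H u :: "complex \<Rightarrow> complex"
  assumes H: "\<And>w. w \<in> ball 0 1 \<Longrightarrow> H differentiable (at w)"
    and u: "\<And>w. u w = H w + of_real ((1 - (norm w)\<^sup>2) / 2) * (w * dz H w + cnj w * dzbar H w)"
    and u_disc: "u ` ball 0 1 \<subseteq> ball 0 1"
    and "z \<in> ball 0 1"
  shows "norm (H z) \<le> 1"
proof -
  have tz: "t *\<^sub>R z \<in> ball 0 1" if "t \<in> {0..1}" for t
  proof -
    have "norm (t *\<^sub>R z) \<le> norm z"
      using that by (simp add: mult_left_le_one_le)
    then show ?thesis using \<open>z \<in> ball 0 1\<close> by simp
  qed
  define \<Phi>' where "\<Phi>' t = dz H (t *\<^sub>R z) * z + dzbar H (t *\<^sub>R z) * cnj z" for t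
  have "norm ((\<lambda>t. H (t *\<^sub>R z)) 1) \<le> 1"
  proof (rule norm_le_one_if_radial_transform_le_one)
    show "0 \<le> (norm z)\<^sup>2" "(norm z)\<^sup>2 < 1"
      using \<open>z \<in> ball 0 1\<close> by (auto simp: abs_square_less_1)
    fix t :: real assume t: "t \<in> {0..1}"
    show "((\<lambda>t. H (t *\<^sub>R z)) has_vector_derivative \<Phi>' t) (at t)"
      using has_vector_derivative_along_line[of H 0 t z] H[OF tz[OF t]]
      by (simp add: \<Phi>'_def frechet_derivative_Wirtinger)
    have "(norm (t *\<^sub>R z))\<^sup>2 = (norm z)\<^sup>2 * t\<^sup>2"
      by (simp add: power_mult_distrib)
    then have "H (t *\<^sub>R z) + ((1 - (norm z)\<^sup>2 * t\<^sup>2) / 2 * t) *\<^sub>R \<Phi>' t = u (t *\<^sub>R z)"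
      unfolding u[of "t *\<^sub>R z"] by (simp add: \<Phi>'_def scaleR_conv_of_real field_simps)
    then show "norm (H (t *\<^sub>R z) + ((1 - (norm z)\<^sup>2 * t\<^sup>2) / 2 * t) *\<^sub>R \<Phi>' t) \<le> 1"
      using u_disc tz[OF t] by fastforce
  qed
  then show ?thesis by simp
qed

lemma Cauchy_first_second_deriv_bounds:
  fixes G G' G'' :: "complex \<Rightarrow> complex"
  assumes "r > 0"
    and G': "\<And>w. w \<in> ball a r \<Longrightarrow> (G has_field_derivative G' w) (at w)"
    and G'': "\<And>w. w \<in> ball a r \<Longrightarrow> (G' has_field_derivative G'' w) (at w)"
    and bounded: "\<And>w. w \<in> ball a r \<Longrightarrow> norm (G w) < M"
  shows "norm (G' a) \<le> 2 * M / r" "norm (G'' a) \<le> 8 * M / r\<^sup>2"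
proof -
  have a: "a \<in> ball a r" using \<open>r > 0\<close> by simp
  have half: "cball a (r / 2) \<subseteq> ball a r" using \<open>r > 0\<close> by (auto simp: subset_iff)
  have "G holomorphic_on ball a (r / 2)"
    using G' half holomorphic_on_open[of "ball a (r / 2)"] by (meson ball_subset_cball open_ball subsetD)
  moreover have "continuous_on (cball a (r / 2)) G"
    using G' half DERIV_isCont continuous_at_imp_continuous_on by (metis subsetD)
  moreover have "G w \<in> ball 0 M" if "w \<in> ball a (r / 2)" for w
    using bounded half that by (auto simp: subset_iff)
  ultimately have Cauchy: "norm ((deriv ^^ n) G a) \<le> fact n * M / (r / 2) ^ n" if "n > 0" for n
    using Cauchy_higher_deriv_bound[of G a "r / 2" 0 M n] \<open>r > 0\<close> that by simp
  have "deriv G w = G' w" if "w \<in> ball a r" for w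
    using G'[OF that] by (rule DERIV_imp_deriv)
  then have "(deriv G has_field_derivative G'' a) (at a)"
    using has_field_derivative_transform_within_open[OF G''[OF a] open_ball a] by simp
  then have "(deriv ^^ 2) G a = G'' a"
    by (simp add: numeral_2_eq_2 DERIV_imp_deriv)
  moreover have "(deriv ^^ 1) G a = G' a"
    using G'[OF a] by (simp add: DERIV_imp_deriv)
  ultimately show "norm (G' a) \<le> 2 * M / r" "norm (G'' a) \<le> 8 * M / r\<^sup>2"
    using Cauchy[of 1] Cauchy[of 2] by (simp_all add: power2_eq_square mult.commute[of M])
qed

lemma deriv_bounds_if_bounded_real_part:
  fixes F F' F'' :: "complex \<Rightarrow> complex"
  assumes "r > 0"
    and F': "\<And>w. w \<in> ball a r \<Longrightarrow> (F has_field_derivative F' w) (at w)"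
    and F'': "\<And>w. w \<in> ball a r \<Longrightarrow> (F' has_field_derivative F'' w) (at w)"
    and Re: "\<And>w. w \<in> ball a r \<Longrightarrow> \<bar>Re (F w)\<bar> \<le> 1"
  shows "norm (F' a) \<le> 18 / r" "norm (F'' a) \<le> 2988 / r\<^sup>2"
proof -
  \<comment> \<open>The Cauchy estimates are applied to \<open>exp F\<close>, whose modulus lies between \<open>1/e\<close> and \<open>e\<close>.\<close>
  have a: "a \<in> ball a r" using \<open>r > 0\<close> by simp
  have exp_bounds: "1 / 3 \<le> exp (Re (F w))" "exp (Re (F w)) < 3" if "w \<in> ball a r" for w
  proof -
    have "exp (- 1) \<le> exp (Re (F w))" "exp (Re (F w)) \<le> exp (1::real)"
      using Re[OF that] by auto
    moreover have "exp (1::real) < 3" using e_less_272 by simp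
    moreover have "1 / 3 < exp (- 1::real)"
      using \<open>exp 1 < 3\<close> by (simp add: exp_minus field_simps)
    ultimately show "1 / 3 \<le> exp (Re (F w))" "exp (Re (F w)) < 3" by linarith+
  qed
  define E where "E = exp (Re (F a))"
  have "E \<ge> 1 / 3" "E \<le> 3" using exp_bounds[OF a] by (simp_all add: E_def)
  have "((\<lambda>w. exp (F w)) has_field_derivative F' w * exp (F w)) (at w)"
    "((\<lambda>w. F' w * exp (F w)) has_field_derivative (F'' w + F' w * F' w) * exp (F w)) (at w)"
    "norm (exp (F w)) < 3"
    if "w \<in> ball a r" for w
    using F'[OF that] F''[OF that] exp_bounds[OF that]
    by (auto intro!: derivative_eq_intros simp: algebra_simps)
  note G_bounds = Cauchy_first_second_deriv_bounds[OF \<open>r > 0\<close> this]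
  have weight: "x \<le> 3 * (x * E)" if "0 \<le> x" for x
    using mult_left_mono[of 1 "3 * E" x] that \<open>E \<ge> 1 / 3\<close> by (simp add: algebra_simps)
  from G_bounds(1) have "norm (F' a) * E \<le> 6 / r"
    by (simp add: E_def norm_mult)
  then show F'a: "norm (F' a) \<le> 18 / r"
    using weight[of "norm (F' a)"] by simp
  have "norm (F'' a) * E \<le> norm ((F'' a + F' a * F' a) * exp (F a)) + norm (F' a) * norm (F' a) * E"
    using norm_triangle_ineq4[of "(F'' a + F' a * F' a) * exp (F a)" "F' a * F' a * exp (F a)"]
    by (simp add: E_def norm_mult algebra_simps)
  also have "\<dots> \<le> 24 / r\<^sup>2 + (18 / r) * (18 / r) * 3"
    using G_bounds(2) F'a \<open>E \<le> 3\<close> \<open>E \<ge> 1 / 3\<close> \<open>r > 0\<close> by (intro add_mono mult_mono) auto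
  finally show "norm (F'' a) \<le> 2988 / r\<^sup>2"
    using weight[of "norm (F'' a)"] by (simp add: power2_eq_square)
qed

lemma norm_le_if_norm_add_and_diff_le:
  fixes p q :: "'a::real_normed_vector"
  assumes "norm (p + q) \<le> K" "norm (p - q) \<le> K"
  shows "norm p \<le> K" "norm q \<le> K"
proof -
  have "2 *\<^sub>R p = (p + q) + (p - q)" "2 *\<^sub>R q = (p + q) - (p - q)"
    by (simp_all add: scaleR_2 algebra_simps)
  then have "norm (2 *\<^sub>R p) \<le> norm (p + q) + norm (p - q)"
    "norm (2 *\<^sub>R q) \<le> norm (p + q) + norm (p - q)"
    by (metis norm_triangle_ineq, metis norm_triangle_ineq4)
  then show "norm p \<le> K" "norm q \<le> K" using assms by simp_all
qed

lemma weighted_deriv_bounds_if_bounded: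
  fixes h g :: "complex \<Rightarrow> complex"
  assumes h: "h holomorphic_on ball 0 1" and g: "g holomorphic_on ball 0 1"
    and bounded: "\<And>w. w \<in> ball 0 1 \<Longrightarrow> norm (h w + cnj (g w)) \<le> 1"
    and "a \<in> ball 0 1"
  defines "\<rho> \<equiv> 1 - (norm a)\<^sup>2"
  shows "\<rho> * norm (deriv h a) \<le> 36" "\<rho> * norm (deriv g a) \<le> 36"
    "\<rho>\<^sup>2 * norm (deriv (deriv h) a) \<le> 11952" "\<rho>\<^sup>2 * norm (deriv (deriv g) a) \<le> 11952"
proof -
  define r where "r = 1 - norm a"
  have "r > 0" using \<open>a \<in> ball 0 1\<close> by (simp add: r_def)
  have sub: "ball a r \<subseteq> ball 0 1"
    by (simp add: ball_subset_ball_iff r_def)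
  have derivs: "(f has_field_derivative deriv f w) (at w)"
    "(deriv f has_field_derivative deriv (deriv f) w) (at w)"
    if "f holomorphic_on ball 0 1" "w \<in> ball a r" for f w
    using that sub by (auto intro!: holomorphic_derivI holomorphic_deriv)
  \<comment> \<open>The real parts of \<open>h + g\<close> and \<open>-i (h - g)\<close> are those of \<open>h + cnj g\<close> and \<open>-i (h + cnj g)\<close>.\<close>
  have "((\<lambda>w. h w + g w) has_field_derivative deriv h w + deriv g w) (at w)"
    "((\<lambda>w. deriv h w + deriv g w) has_field_derivative deriv (deriv h) w + deriv (deriv g) w) (at w)"
    "\<bar>Re (h w + g w)\<bar> \<le> 1"
    if "w \<in> ball a r" for w
    using derivs[OF h that] derivs[OF g that] sub that
      bounded[of w] abs_Re_le_cmod[of "h w + cnj (g w)"]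
    by (auto intro!: derivative_eq_intros)
  note sum_bounds = deriv_bounds_if_bounded_real_part[where a = a, OF \<open>r > 0\<close> this]
  have "((\<lambda>w. - \<i> * (h w - g w)) has_field_derivative - \<i> * (deriv h w - deriv g w)) (at w)"
    "((\<lambda>w. - \<i> * (deriv h w - deriv g w)) has_field_derivative
        - \<i> * (deriv (deriv h) w - deriv (deriv g) w)) (at w)"
    "\<bar>Re (- \<i> * (h w - g w))\<bar> \<le> 1"
    if "w \<in> ball a r" for w
    using derivs[OF h that] derivs[OF g that] sub that
      bounded[of w] abs_Im_le_cmod[of "h w + cnj (g w)"]
    by (auto intro!: derivative_eq_intros)
  note diff_bounds = deriv_bounds_if_bounded_real_part[where a = a, OF \<open>r > 0\<close> this]
  have "norm (deriv h a - deriv g a) \<le> 18 / r"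
    "norm (deriv (deriv h) a - deriv (deriv g) a) \<le> 2988 / r\<^sup>2"
    using diff_bounds by (simp_all add: norm_mult)
  note bounds = norm_le_if_norm_add_and_diff_le[OF sum_bounds(1) this(1)]
    norm_le_if_norm_add_and_diff_le[OF sum_bounds(2) this(2)]
  have "\<rho> = r * (1 + norm a)"
    by (simp add: \<rho>_def r_def power2_eq_square algebra_simps)
  moreover have "1 + norm a \<le> 2" using \<open>a \<in> ball 0 1\<close> by simp
  ultimately have "0 \<le> \<rho>" "\<rho> \<le> 2 * r"
    using \<open>r > 0\<close> mult_left_mono[of "1 + norm a" 2 r] by auto
  have weight\<^sub>1: "\<rho> * x \<le> 36" if "x \<le> 18 / r" "0 \<le> x" for x
  proof -
    have "\<rho> * x \<le> (2 * r) * (18 / r)"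
      using that \<open>0 \<le> \<rho>\<close> \<open>\<rho> \<le> 2 * r\<close> by (intro mult_mono) auto
    also have "\<dots> = 36" using \<open>r > 0\<close> by simp
    finally show ?thesis .
  qed
  have weight\<^sub>2: "\<rho>\<^sup>2 * y \<le> 11952" if "y \<le> 2988 / r\<^sup>2" "0 \<le> y" for y
  proof -
    have "\<rho>\<^sup>2 * y \<le> (2 * r)\<^sup>2 * (2988 / r\<^sup>2)"
      using that \<open>0 \<le> \<rho>\<close> \<open>\<rho> \<le> 2 * r\<close> by (intro mult_mono power_mono) auto
    also have "\<dots> = 11952" using \<open>r > 0\<close> by (simp add: power_mult_distrib)
    finally show ?thesis .
  qed
  show "\<rho> * norm (deriv h a) \<le> 36" "\<rho> * norm (deriv g a) \<le> 36"
    using bounds(1,2) by (auto intro: weight\<^sub>1)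
  show "\<rho>\<^sup>2 * norm (deriv (deriv h) a) \<le> 11952" "\<rho>\<^sup>2 * norm (deriv (deriv g) a) \<le> 11952"
    using bounds(3,4) by (auto intro: weight\<^sub>2)
qed

lemma Wirtinger_derivatives_of_transform:
  fixes H u :: "complex \<Rightarrow> complex"
  assumes H: "H differentiable (at a)"
    and P: "(dz H has_field_derivative P) (at a)"
    and Q: "((\<lambda>w. cnj (dzbar H w)) has_field_derivative Q) (at a)"
    and u: "\<And>w. u w = H w + of_real ((1 - (norm w)\<^sup>2) / 2) * (w * dz H w + cnj w * dzbar H w)"
  defines "S \<equiv> a * dz H a + cnj a * dzbar H a" and "\<rho> \<equiv> 1 - (norm a)\<^sup>2"
  shows "dz u a = dz H a - cnj a * S / 2 + of_real \<rho> / 2 * (dz H a + a * P)"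
    and "dzbar u a = dzbar H a - a * S / 2 + of_real \<rho> / 2 * (dzbar H a + cnj a * cnj Q)"
proof -
  have norm_sq: "(complex_of_real (norm w))\<^sup>2 = w * cnj w" for w
    using complex_norm_square[of w] by simp
  have u_eq: "u = (\<lambda>w. H w + (1 - w * cnj w) / 2 * (w * dz H w + cnj w * dzbar H w))"
    by (simp add: fun_eq_iff u norm_sq)
  have "(dzbar H has_derivative (\<lambda>v. cnj Q * cnj v)) (at a)"
    using has_derivative_cnj[OF Q[unfolded has_field_derivative_def]] by simp
  then have "(u has_derivative
      (\<lambda>v. (dz H a - cnj a * S / 2 + of_real \<rho> / 2 * (dz H a + a * P)) * v
         + (dzbar H a - a * S / 2 + of_real \<rho> / 2 * (dzbar H a + cnj a * cnj Q)) * cnj v)) (at a)"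
    unfolding u_eq using has_derivative_Wirtinger[OF H] P[unfolded has_field_derivative_def]
    by (auto intro!: derivative_eq_intros simp: S_def \<rho>_def fun_eq_iff field_simps norm_sq)
  then show "dz u a = dz H a - cnj a * S / 2 + of_real \<rho> / 2 * (dz H a + a * P)"
    and "dzbar u a = dzbar H a - a * S / 2 + of_real \<rho> / 2 * (dzbar H a + cnj a * cnj Q)"
    by (rule Wirtinger_derivatives_unique)+
qed

lemma weighted_norm_transform_coefficient_le:
  fixes a c p p\<^sub>2 S :: complex and \<rho> :: real
  assumes "norm a \<le> 1" "norm c \<le> 1" "0 \<le> \<rho>" "\<rho> \<le> 1"
    and "\<rho> * norm p \<le> 36" "\<rho> * norm S \<le> 72" "\<rho>\<^sup>2 * norm p\<^sub>2 \<le> 11952"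
  shows "\<rho> * norm (p - c * S / 2 + of_real \<rho> / 2 * (p + a * p\<^sub>2)) \<le> 6100"
proof -
  have "norm (c * S / 2) \<le> norm S / 2"
    using assms(2) by (simp add: norm_mult mult_left_le_one_le)
  moreover have "norm (of_real \<rho> / 2 * (p + a * p\<^sub>2)) \<le> \<rho> / 2 * (norm p + norm p\<^sub>2)"
  proof -
    have "norm (p + a * p\<^sub>2) \<le> norm p + norm p\<^sub>2"
      using norm_triangle_ineq[of p "a * p\<^sub>2"] assms(1)
      by (simp add: norm_mult mult_left_le_one_le order_trans)
    then show ?thesis
      using \<open>0 \<le> \<rho>\<close> by (simp add: norm_mult mult_left_mono)
  qed
  moreover have "norm (p - c * S / 2 + of_real \<rho> / 2 * (p + a * p\<^sub>2))
      \<le> norm p + norm (c * S / 2) + norm (of_real \<rho> / 2 * (p + a * p\<^sub>2))"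
    using norm_triangle_ineq[of "p - c * S / 2" "of_real \<rho> / 2 * (p + a * p\<^sub>2)"]
      norm_triangle_ineq4[of p "c * S / 2"] by linarith
  ultimately have "norm (p - c * S / 2 + of_real \<rho> / 2 * (p + a * p\<^sub>2))
      \<le> norm p + norm S / 2 + \<rho> / 2 * (norm p + norm p\<^sub>2)"
    by linarith
  then have "\<rho> * norm (p - c * S / 2 + of_real \<rho> / 2 * (p + a * p\<^sub>2))
      \<le> \<rho> * (norm p + norm S / 2 + \<rho> / 2 * (norm p + norm p\<^sub>2))"
    using \<open>0 \<le> \<rho>\<close> by (rule mult_left_mono)
  also have "\<dots> = \<rho> * norm p + \<rho> * norm S / 2 + \<rho> * (\<rho> * norm p) / 2 + \<rho>\<^sup>2 * norm p\<^sub>2 / 2"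
    by (simp add: algebra_simps power2_eq_square)
  finally have "\<rho> * norm (p - c * S / 2 + of_real \<rho> / 2 * (p + a * p\<^sub>2))
      \<le> \<rho> * norm p + \<rho> * norm S / 2 + \<rho> * (\<rho> * norm p) / 2 + \<rho>\<^sup>2 * norm p\<^sub>2 / 2" .
  moreover have "\<rho> * (\<rho> * norm p) \<le> \<rho> * norm p"
    using \<open>0 \<le> \<rho>\<close> \<open>\<rho> \<le> 1\<close> by (simp add: mult_left_le_one_le)
  ultimately show ?thesis using assms(5-7) by linarith
qed

lemma weighted_Wirtinger_bounds_if_harmonic_bounded:
  fixes H :: "complex \<Rightarrow> complex"
  assumes harmonic: "harmonic_on H (ball 0 1)"
    and bounded: "\<And>w. w \<in> ball 0 1 \<Longrightarrow> norm (H w) \<le> 1"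
    and a: "a \<in> ball 0 1"
  defines "\<rho> \<equiv> 1 - (norm a)\<^sup>2"
  obtains P Q where "(dz H has_field_derivative P) (at a)"
    "((\<lambda>w. cnj (dzbar H w)) has_field_derivative Q) (at a)"
    "\<rho> * norm (dz H a) \<le> 36" "\<rho> * norm (dzbar H a) \<le> 36"
    "\<rho>\<^sup>2 * norm P \<le> 11952" "\<rho>\<^sup>2 * norm Q \<le> 11952"
proof -
  obtain h g where h: "h holomorphic_on ball 0 1" and g: "g holomorphic_on ball 0 1"
    and H: "\<And>w. w \<in> ball 0 1 \<Longrightarrow> H w = h w + cnj (g w)"
    and h': "\<And>w. w \<in> ball 0 1 \<Longrightarrow> deriv h w = dz H w"
    and g': "\<And>w. w \<in> ball 0 1 \<Longrightarrow> deriv g w = cnj (dzbar H w)"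
    using harmonic_decomposition[OF harmonic convex_ball] by blast
  have "norm (h w + cnj (g w)) \<le> 1" if "w \<in> ball 0 1" for w
    using bounded[OF that] H[OF that] by simp
  note weights = weighted_deriv_bounds_if_bounded[OF h g this a, folded \<rho>_def,
      unfolded h'[OF a] g'[OF a] complex_mod_cnj]
  have "(deriv f has_field_derivative deriv (deriv f) a) (at a)"
    if "f holomorphic_on ball 0 1" for f
    using holomorphic_derivI[OF holomorphic_deriv[OF that open_ball] open_ball a] .
  then have "(dz H has_field_derivative deriv (deriv h) a) (at a)"
    "((\<lambda>w. cnj (dzbar H w)) has_field_derivative deriv (deriv g) a) (at a)"
    using h g h' g'
    by (metis has_field_derivative_transform_within_open open_ball a)+
  with weights show ?thesis by (intro that)
qed

lemma weighted_Wirtinger_derivatives_of_transform_le: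
  fixes H u :: "complex \<Rightarrow> complex"
  assumes harmonic: "harmonic_on H (ball 0 1)"
    and u: "\<And>w. u w = H w + of_real ((1 - (norm w)\<^sup>2) / 2) * (w * dz H w + cnj w * dzbar H w)"
    and bounded: "\<And>w. w \<in> ball 0 1 \<Longrightarrow> norm (H w) \<le> 1"
    and a: "a \<in> ball 0 1"
  shows "(1 - (norm a)\<^sup>2) * (norm (dz u a) + norm (dzbar u a)) \<le> 12200"
proof -
  define \<rho> where "\<rho> = 1 - (norm a)\<^sup>2"
  obtain P Q where P: "(dz H has_field_derivative P) (at a)"
    and Q: "((\<lambda>w. cnj (dzbar H w)) has_field_derivative Q) (at a)"
    and weights: "\<rho> * norm (dz H a) \<le> 36" "\<rho> * norm (dzbar H a) \<le> 36"
      "\<rho>\<^sup>2 * norm P \<le> 11952" "\<rho>\<^sup>2 * norm Q \<le> 11952"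
    using weighted_Wirtinger_bounds_if_harmonic_bounded[OF harmonic bounded a] unfolding \<rho>_def
    by blast
  have "H differentiable (at a)"
    using harmonic a by (simp add: harmonic_on_def)
  note derivs = Wirtinger_derivatives_of_transform[OF this P Q u, folded \<rho>_def]
  have "0 \<le> \<rho>" "\<rho> \<le> 1" "norm a \<le> 1"
    using a by (auto simp: \<rho>_def abs_square_le_1 less_imp_le)
  have "norm (a * dz H a + cnj a * dzbar H a) \<le> norm (dz H a) + norm (dzbar H a)"
    using \<open>norm a \<le> 1\<close> norm_triangle_ineq[of "a * dz H a" "cnj a * dzbar H a"]
      mult_left_le_one_le[of "norm (dz H a)" "norm a"] mult_left_le_one_le[of "norm (dzbar H a)" "norm a"]
    by (simp add: norm_mult)
  then have "\<rho> * norm (a * dz H a + cnj a * dzbar H a) \<le> \<rho> * (norm (dz H a) + norm (dzbar H a))"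
    using \<open>0 \<le> \<rho>\<close> by (rule mult_left_mono)
  then have S: "\<rho> * norm (a * dz H a + cnj a * dzbar H a) \<le> 72"
    using weights(1,2) by (simp add: distrib_left)
  have "\<rho> * norm (dz u a) \<le> 6100"
    unfolding derivs(1) using weights S \<open>0 \<le> \<rho>\<close> \<open>\<rho> \<le> 1\<close> \<open>norm a \<le> 1\<close>
    by (intro weighted_norm_transform_coefficient_le) simp_all
  moreover have "\<rho> * norm (dzbar u a) \<le> 6100"
    unfolding derivs(2) using weights S \<open>0 \<le> \<rho>\<close> \<open>\<rho> \<le> 1\<close> \<open>norm a \<le> 1\<close>
    by (intro weighted_norm_transform_coefficient_le) simp_all
  ultimately show ?thesis
    by (simp add: \<rho>_def distrib_left)
qed

theorem corollary4:
  fixes H u :: "complex \<Rightarrow> complex"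
  assumes "harmonic_on H (ball 0 1)"
    and "\<And>z. u z = H z + of_real ((1 - (norm z)\<^sup>2) / 2) * (z * dz H z + cnj z * dzbar H z)"
    and "u ` ball 0 1 \<subseteq> ball 0 1"
  shows "\<exists>c::real. 0 < c \<and>
           (\<forall>z\<in>ball 0 1. (1 - (norm z)\<^sup>2) * (norm (dz u z) + norm (dzbar u z)) \<le> c)"
proof -
  have "norm (H w) \<le> 1" if "w \<in> ball 0 1" for w
    using assms that
    by (intro norm_le_one_if_transform_maps_into_disc) (auto simp: harmonic_on_def)
  then show ?thesis
    using weighted_Wirtinger_derivatives_of_transform_le[OF assms(1,2)]
    by (intro exI[of _ 12200]) auto
qed

end
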